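(* Let $\mathcal V$ be a descent category, $k$ a positive integer, and $X$ a $k$-category in $\mathcal V$. Then $X$ is $(k+1)$-coskeletal: for every $n\ge0$ the natural morphism $X_n\to\mathrm{Map}(\mathrm{sk}_{k+1}\Delta^n,X)$ is an isomorphism.
   Context: A descent category is a small category $\mathcal V$ with a subcategory of morphisms called covers such that: $\mathcal V$ has finite limits; pullbacks of covers are covers; if $f$ and $g\circ f$ are covers then $g$ is a cover. A simplicial space is a simplicial object in $\mathcal V$; for a finite simplicial set $T$, $\mathrm{Map}(T,X)$ is the finite limit representing simplicial maps $T\to X$; $\mathrm{sk}_{j}\Delta^n$ is the $j$-skeleton. $\Lambda^n_i=\bigcup_{j\ne i}\partial_j\Delta^n$. $\boldsymbol\Delta^1$ is the nerve of the groupoid with objects $\{0,1\}$ and exactly one morphism between any two objects, and $\mathrm{Map}(\boldsymbol\Delta^1,X)$ the limit representing simplicial maps $\boldsymbol\Delta^1\to X$. A $k$-category is a simplicial space $X$ such that $X_n\to\mathrm{Map}(\Lambda^n_i,X)$ is a cover for $0<i<n$ and an isomorphism for $n>k$, and $\mathrm{Map}(\boldsymbol\Delta^1,X)\to X_0$ (restriction to a vertex) is a cover. *)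

theory Defs
  imports Main
begin

record ('o,'m) cat =
  Ob  :: "'o set"
  Ar  :: "'m set"
  Dom :: "'m \<Rightarrow> 'o"
  Cod :: "'m \<Rightarrow> 'o"
  Cmp :: "'m \<Rightarrow> 'm \<Rightarrow> 'm"   (* Cmp C g f = g o f *)
  Idm :: "'o \<Rightarrow> 'm"

definition hom :: "('o,'m) cat \<Rightarrow> 'o \<Rightarrow> 'o \<Rightarrow> 'm \<Rightarrow> bool" where
  "hom C a b f \<longleftrightarrow> f \<in> Ar C \<and> Dom C f = a \<and> Cod C f = b"

definition is_category :: "('o,'m) cat \<Rightarrow> bool" where
  "is_category C \<longleftrightarrow>
     (\<forall>f\<in>Ar C. Dom C f \<in> Ob C \<and> Cod C f \<in> Ob C) \<and>
     (\<forall>a\<in>Ob C. hom C a a (Idm C a)) \<and>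
     (\<forall>f\<in>Ar C. \<forall>g\<in>Ar C. Cod C f = Dom C g \<longrightarrow> hom C (Dom C f) (Cod C g) (Cmp C g f)) \<and>
     (\<forall>f\<in>Ar C. \<forall>g\<in>Ar C. \<forall>h\<in>Ar C. Cod C f = Dom C g \<longrightarrow> Cod C g = Dom C h \<longrightarrow>
         Cmp C h (Cmp C g f) = Cmp C (Cmp C h g) f) \<and>
     (\<forall>f\<in>Ar C. Cmp C f (Idm C (Dom C f)) = f \<and> Cmp C (Idm C (Cod C f)) f = f)"

definition iso :: "('o,'m) cat \<Rightarrow> 'm \<Rightarrow> bool" where
  "iso C f \<longleftrightarrow> f \<in> Ar C \<and> (\<exists>g. hom C (Cod C f) (Dom C f) g \<and>
       Cmp C g f = Idm C (Dom C f) \<and> Cmp C f g = Idm C (Cod C f))"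

definition is_terminal :: "('o,'m) cat \<Rightarrow> 'o \<Rightarrow> bool" where
  "is_terminal C t \<longleftrightarrow> t \<in> Ob C \<and> (\<forall>a\<in>Ob C. \<exists>!f. hom C a t f)"

text \<open>Pullback square: f : A -> D, g : B -> D, p : P -> A, q : P -> B with f p = g q.
  Then q is the pullback of f along g.\<close>
definition is_pullback :: "('o,'m) cat \<Rightarrow> 'm \<Rightarrow> 'm \<Rightarrow> 'm \<Rightarrow> 'm \<Rightarrow> bool" where
  "is_pullback C f g p q \<longleftrightarrow>
     f \<in> Ar C \<and> g \<in> Ar C \<and> Cod C f = Cod C g \<and>
     hom C (Dom C p) (Dom C f) p \<and> hom C (Dom C p) (Dom C g) q \<and>
     Cmp C f p = Cmp C g q \<and>
     (\<forall>p' q'. hom C (Dom C p') (Dom C f) p' \<and> hom C (Dom C p') (Dom C g) q' \<and>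
        Dom C q' = Dom C p' \<and> Cmp C f p' = Cmp C g q' \<longrightarrow>
        (\<exists>!u. hom C (Dom C p') (Dom C p) u \<and> Cmp C p u = p' \<and> Cmp C q u = q'))"

text \<open>Finite limits, via the standard criterion: a terminal object and all pullbacks.\<close>
definition has_finite_limits :: "('o,'m) cat \<Rightarrow> bool" where
  "has_finite_limits C \<longleftrightarrow> (\<exists>t. is_terminal C t) \<and>
     (\<forall>f\<in>Ar C. \<forall>g\<in>Ar C. Cod C f = Cod C g \<longrightarrow> (\<exists>p q. is_pullback C f g p q))"

definition descent_category :: "('o,'m) cat \<Rightarrow> 'm set \<Rightarrow> bool" where
  "descent_category C Cov \<longleftrightarrow>
     is_category C \<and> has_finite_limits C \<and>
     Cov \<subseteq> Ar C \<and>
     (\<forall>a\<in>Ob C. Idm C a \<in> Cov) \<and>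
     (\<forall>f\<in>Cov. \<forall>g\<in>Cov. Cod C f = Dom C g \<longrightarrow> Cmp C g f \<in> Cov) \<and>
     (\<forall>f g p q. is_pullback C f g p q \<and> f \<in> Cov \<longrightarrow> q \<in> Cov) \<and>
     (\<forall>f\<in>Ar C. \<forall>g\<in>Ar C. Cod C f = Dom C g \<and> f \<in> Cov \<and> Cmp C g f \<in> Cov \<longrightarrow> g \<in> Cov)"

text \<open>Monotone maps [m] -> [n]; only the values on {0..m} matter.\<close>
definition mono_map :: "nat \<Rightarrow> nat \<Rightarrow> (nat \<Rightarrow> nat) \<Rightarrow> bool" where
  "mono_map m n \<theta> \<longleftrightarrow> (\<forall>i\<le>m. \<theta> i \<le> n) \<and> (\<forall>i j. i \<le> j \<and> j \<le> m \<longrightarrow> \<theta> i \<le> \<theta> j)"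

text \<open>A simplicial object: objects Xo n = X_n and, for monotone theta : [m] -> [n],
  the morphism Xm m n theta : X_n -> X_m (contravariant functor on Delta).\<close>
definition simplicial_object ::
  "('o,'m) cat \<Rightarrow> (nat \<Rightarrow> 'o) \<Rightarrow> (nat \<Rightarrow> nat \<Rightarrow> (nat \<Rightarrow> nat) \<Rightarrow> 'm) \<Rightarrow> bool" where
  "simplicial_object C Xo Xm \<longleftrightarrow>
     (\<forall>n. Xo n \<in> Ob C) \<and>
     (\<forall>m n \<theta>. mono_map m n \<theta> \<longrightarrow> hom C (Xo n) (Xo m) (Xm m n \<theta>)) \<and>
     (\<forall>m n \<theta> \<theta>'. mono_map m n \<theta> \<and> (\<forall>i\<le>m. \<theta> i = \<theta>' i) \<longrightarrow> Xm m n \<theta> = Xm m n \<theta>') \<and>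
     (\<forall>n. Xm n n (\<lambda>i. i) = Idm C (Xo n)) \<and>
     (\<forall>l m n \<phi> \<theta>. mono_map l m \<phi> \<and> mono_map m n \<theta> \<longrightarrow>
         Xm l n (\<theta> \<circ> \<phi>) = Cmp C (Xm l m \<phi>) (Xm m n \<theta>))"

text \<open>A simplex is a pair (m, sigma) with sigma the list of its vertices, encoded
  as a function on {0..m}, normalised to be 0 beyond m.\<close>
definition restr :: "nat \<Rightarrow> (nat \<Rightarrow> nat) \<Rightarrow> nat \<Rightarrow> nat" where
  "restr m \<sigma> = (\<lambda>i. if i \<le> m then \<sigma> i else 0)"

definition normal :: "nat \<Rightarrow> (nat \<Rightarrow> nat) \<Rightarrow> bool" where
  "normal m \<sigma> \<longleftrightarrow> (\<forall>i>m. \<sigma> i = 0)"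

definition simplex_set :: "nat \<Rightarrow> (nat \<times> (nat \<Rightarrow> nat)) set" where
  "simplex_set n = {(m,\<sigma>). mono_map m n \<sigma> \<and> normal m \<sigma>}"

definition skel :: "nat \<Rightarrow> nat \<Rightarrow> (nat \<times> (nat \<Rightarrow> nat)) set" where
  "skel j n = {(m,\<sigma>). (m,\<sigma>) \<in> simplex_set n \<and> card (\<sigma> ` {0..m}) \<le> j + 1}"

text \<open>Horn Lambda^n_i = union of the faces d_j Delta^n, j /= i (d_j misses vertex j).\<close>
definition horn :: "nat \<Rightarrow> nat \<Rightarrow> (nat \<times> (nat \<Rightarrow> nat)) set" where
  "horn n i = {(m,\<sigma>). (m,\<sigma>) \<in> simplex_set n \<and> (\<exists>j\<le>n. j \<noteq> i \<and> j \<notin> \<sigma> ` {0..m})}"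

text \<open>Nerve of the groupoid with objects {0,1} and one morphism between any two objects:
  its m-simplices are arbitrary maps [m] -> {0,1}.\<close>
definition groupoid_interval :: "(nat \<times> (nat \<Rightarrow> nat)) set" where
  "groupoid_interval = {(m,\<sigma>). (\<forall>i\<le>m. \<sigma> i \<le> 1) \<and> normal m \<sigma>}"

definition is_cone ::
  "('o,'m) cat \<Rightarrow> (nat \<Rightarrow> 'o) \<Rightarrow> (nat \<Rightarrow> nat \<Rightarrow> (nat \<Rightarrow> nat) \<Rightarrow> 'm) \<Rightarrow>
   (nat \<times> (nat \<Rightarrow> nat)) set \<Rightarrow> 'o \<Rightarrow> (nat \<times> (nat \<Rightarrow> nat) \<Rightarrow> 'm) \<Rightarrow> bool" where
  "is_cone C Xo Xm T A a \<longleftrightarrow> A \<in> Ob C \<and>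
     (\<forall>(m,\<sigma>)\<in>T. hom C A (Xo m) (a (m,\<sigma>))) \<and>
     (\<forall>(m,\<sigma>)\<in>T. \<forall>m' \<theta>. mono_map m' m \<theta> \<longrightarrow>
         Cmp C (Xm m' m \<theta>) (a (m,\<sigma>)) = a (m', restr m' (\<sigma> \<circ> \<theta>)))"

definition is_Map ::
  "('o,'m) cat \<Rightarrow> (nat \<Rightarrow> 'o) \<Rightarrow> (nat \<Rightarrow> nat \<Rightarrow> (nat \<Rightarrow> nat) \<Rightarrow> 'm) \<Rightarrow>
   (nat \<times> (nat \<Rightarrow> nat)) set \<Rightarrow> 'o \<Rightarrow> (nat \<times> (nat \<Rightarrow> nat) \<Rightarrow> 'm) \<Rightarrow> bool" where
  "is_Map C Xo Xm T A a \<longleftrightarrow> is_cone C Xo Xm T A a \<and>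
     (\<forall>B b. is_cone C Xo Xm T B b \<longrightarrow>
        (\<exists>!u. hom C B A u \<and> (\<forall>s\<in>T. Cmp C (a s) u = b s)))"

definition can_cone :: "(nat \<Rightarrow> nat \<Rightarrow> (nat \<Rightarrow> nat) \<Rightarrow> 'm) \<Rightarrow> nat \<Rightarrow> nat \<times> (nat \<Rightarrow> nat) \<Rightarrow> 'm" where
  "can_cone Xm n = (\<lambda>(m,\<sigma>). Xm m n \<sigma>)"

definition can_map ::
  "('o,'m) cat \<Rightarrow> (nat \<Rightarrow> 'o) \<Rightarrow> (nat \<Rightarrow> nat \<Rightarrow> (nat \<Rightarrow> nat) \<Rightarrow> 'm) \<Rightarrow> nat \<Rightarrow>
   (nat \<times> (nat \<Rightarrow> nat)) set \<Rightarrow> 'o \<Rightarrow> (nat \<times> (nat \<Rightarrow> nat) \<Rightarrow> 'm) \<Rightarrow> 'm" where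
  "can_map C Xo Xm n T A a =
     (THE u. hom C (Xo n) A u \<and> (\<forall>s\<in>T. Cmp C (a s) u = can_cone Xm n s))"

definition k_category ::
  "('o,'m) cat \<Rightarrow> 'm set \<Rightarrow> nat \<Rightarrow> (nat \<Rightarrow> 'o) \<Rightarrow> (nat \<Rightarrow> nat \<Rightarrow> (nat \<Rightarrow> nat) \<Rightarrow> 'm) \<Rightarrow> bool" where
  "k_category C Cov k Xo Xm \<longleftrightarrow>
     simplicial_object C Xo Xm \<and>
     (\<forall>n i A a. 0 < i \<and> i < n \<and> is_Map C Xo Xm (horn n i) A a \<longrightarrow>
         can_map C Xo Xm n (horn n i) A a \<in> Cov \<and>
         (k < n \<longrightarrow> iso C (can_map C Xo Xm n (horn n i) A a))) \<and>
     (\<forall>A a. is_Map C Xo Xm groupoid_interval A a \<longrightarrow> a (0, \<lambda>_. 0) \<in> Cov)"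

end

theory Submission
  imports Defs
begin

text \<open>
  Extend a cone over the \<open>(k+1)\<close>-skeleton of \<open>\<Delta>\<^sup>n\<close> one dimension at a time. A simplex
  spanning \<open>j+2\<close> vertices, \<open>j > k\<close>, factors through the nondegenerate \<open>(j+1)\<close>-simplex \<open>\<iota>\<close>
  on its vertex set. The horn \<open>\<Lambda>\<^bsup>j+1\<^esup>\<^sub>1\<close> of \<open>\<iota>\<close> lies in the \<open>j\<close>-skeleton, and since
  \<open>j+1 > k\<close>, \<open>X\<^bsub>j+1\<^esub>\<close> is the limit over this horn, which determines the value on \<open>\<iota>\<close>
  uniquely. The missing face \<open>d\<^sub>1\<iota>\<close> is then forced by the same uniqueness one dimension lower,
  for \<open>\<Lambda>\<^sup>j\<^sub>1\<close>; this needs \<open>1 < j\<close>, i.e. \<open>k > 0\<close>. Once the skeleton is all of \<open>\<Delta>\<^sup>n\<close>, its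
  limit is \<open>X\<^sub>n\<close> by Yoneda. Finite limits serve only to guarantee that \<open>Map(\<Lambda>\<^sup>n\<^sub>i, X)\<close> exists,
  since the definition of a \<open>k\<close>-category quantifies over its representatives.
\<close>

locale category =
  fixes C :: "('o,'m) cat"
  assumes is_cat: "is_category C"
begin

lemma comp_hom: "hom C a b f \<Longrightarrow> hom C b c g \<Longrightarrow> hom C a c (Cmp C g f)"
  using is_cat unfolding is_category_def hom_def by metis

lemma comp_assoc:
  "hom C a b f \<Longrightarrow> hom C b c g \<Longrightarrow> hom C c d h \<Longrightarrow> Cmp C h (Cmp C g f) = Cmp C (Cmp C h g) f"
  using is_cat unfolding is_category_def hom_def by metis

lemma comp_id_left: "hom C a b f \<Longrightarrow> Cmp C (Idm C b) f = f"
  using is_cat unfolding is_category_def hom_def by metis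

lemma comp_id_right: "hom C a b f \<Longrightarrow> Cmp C f (Idm C a) = f"
  using is_cat unfolding is_category_def hom_def by metis

lemma id_hom: "a \<in> Ob C \<Longrightarrow> hom C a a (Idm C a)"
  using is_cat unfolding is_category_def hom_def by metis

lemma hom_Ob: "hom C a b f \<Longrightarrow> a \<in> Ob C \<and> b \<in> Ob C"
  using is_cat unfolding is_category_def hom_def by metis

lemma iso_inverse:
  assumes "iso C c" "hom C a b c"
  obtains g where "hom C b a g" "Cmp C g c = Idm C a" "Cmp C c g = Idm C b"
  using assms unfolding iso_def hom_def by metis

lemma iso_cancel_left:
  assumes i: "iso C c" and c: "hom C a b c" and u: "hom C x a u1" "hom C x a u2"
    and e: "Cmp C c u1 = Cmp C c u2"
  shows "u1 = u2"
proof -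
  obtain g where g: "hom C b a g" "Cmp C g c = Idm C a"
    using iso_inverse[OF i c] by metis
  have "u1 = Cmp C (Cmp C g c) u1" using g(2) comp_id_left[OF u(1)] by simp
  also have "\<dots> = Cmp C (Cmp C g c) u2" using comp_assoc[OF u(1) c g(1)] comp_assoc[OF u(2) c g(1)] e
    by simp
  also have "\<dots> = u2" using g(2) comp_id_left[OF u(2)] by simp
  finally show ?thesis .
qed

lemma pullback_factor:
  assumes "is_pullback C f g p q" "hom C x (Dom C f) p'" "hom C x (Dom C g) q'"
    "Cmp C f p' = Cmp C g q'"
  shows "\<exists>!u. hom C x (Dom C p) u \<and> Cmp C p u = p' \<and> Cmp C q u = q'"
proof -
  have dom: "Dom C p' = x" "Dom C q' = x" using assms(2,3) unfolding hom_def by auto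
  have univ: "\<forall>p' q'. hom C (Dom C p') (Dom C f) p' \<and> hom C (Dom C p') (Dom C g) q' \<and>
      Dom C q' = Dom C p' \<and> Cmp C f p' = Cmp C g q' \<longrightarrow>
      (\<exists>!u. hom C (Dom C p') (Dom C p) u \<and> Cmp C p u = p' \<and> Cmp C q u = q')"
    using assms(1) unfolding is_pullback_def by blast
  have "\<exists>!u. hom C (Dom C p') (Dom C p) u \<and> Cmp C p u = p' \<and> Cmp C q u = q'"
    by (rule mp[OF spec[OF spec[OF univ]]]) (use assms(2-4) dom in simp)
  then show ?thesis using dom(1) by simp
qed

lemma pullback_jointly_mono:
  assumes pb: "is_pullback C f g p q" and v: "hom C x (Dom C p) v1" "hom C x (Dom C p) v2"
    and e: "Cmp C p v1 = Cmp C p v2" "Cmp C q v1 = Cmp C q v2"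
  shows "v1 = v2"
proof -
  have p: "hom C (Dom C p) (Dom C f) p" and q: "hom C (Dom C p) (Dom C g) q"
    and fg: "Cmp C f p = Cmp C g q" and f: "hom C (Dom C f) (Cod C f) f"
    and g: "hom C (Dom C g) (Cod C f) g"
    using pb unfolding is_pullback_def hom_def by auto
  have "Cmp C f (Cmp C p v1) = Cmp C g (Cmp C q v1)"
    using comp_assoc[OF v(1) p f] comp_assoc[OF v(1) q g] fg by simp
  then have "\<exists>!u. hom C x (Dom C p) u \<and> Cmp C p u = Cmp C p v1 \<and> Cmp C q u = Cmp C q v1"
    by (rule pullback_factor[OF pb comp_hom[OF v(1) p] comp_hom[OF v(1) q]])
  then show ?thesis using v e by (simp add: Ex1_def) metis
qed

end

lemma mono_map_comp: "mono_map l m \<phi> \<Longrightarrow> mono_map m n \<theta> \<Longrightarrow> mono_map l n (\<theta> \<circ> \<phi>)"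
  unfolding mono_map_def by auto

lemma image_restr: "restr m f ` {0..m} = f ` {0..m}"
  unfolding restr_def by auto

locale simplicial_obj = category C for C :: "('o,'m) cat" +
  fixes Xo :: "nat \<Rightarrow> 'o" and Xm :: "nat \<Rightarrow> nat \<Rightarrow> (nat \<Rightarrow> nat) \<Rightarrow> 'm"
  assumes simplicial: "simplicial_object C Xo Xm"
begin

lemma Xo_Ob: "Xo n \<in> Ob C"
  using simplicial unfolding simplicial_object_def by blast

lemma Xm_hom: "mono_map m n \<theta> \<Longrightarrow> hom C (Xo n) (Xo m) (Xm m n \<theta>)"
  using simplicial unfolding simplicial_object_def by blast

lemma Xm_cong: "mono_map m n \<theta> \<Longrightarrow> (\<And>i. i \<le> m \<Longrightarrow> \<theta> i = \<theta>' i) \<Longrightarrow> Xm m n \<theta> = Xm m n \<theta>'"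
  using simplicial unfolding simplicial_object_def by blast

lemma Xm_restr: "mono_map m n \<theta> \<Longrightarrow> Xm m n (restr m \<theta>) = Xm m n \<theta>"
  by (rule Xm_cong[symmetric]) (auto simp: restr_def)

lemma Xm_comp:
  "mono_map l m \<phi> \<Longrightarrow> mono_map m n \<theta> \<Longrightarrow> Cmp C (Xm l m \<phi>) (Xm m n \<theta>) = Xm l n (\<theta> \<circ> \<phi>)"
  using simplicial unfolding simplicial_object_def by metis

lemma Xm_id: "Xm n n (\<lambda>i. i) = Idm C (Xo n)"
  using simplicial unfolding simplicial_object_def by blast

lemma Xm_comp_hom:
  assumes "mono_map l m \<phi>" "mono_map m n \<theta>" "hom C b (Xo n) u"
  shows "Cmp C (Xm l m \<phi>) (Cmp C (Xm m n \<theta>) u) = Cmp C (Xm l n (\<theta> \<circ> \<phi>)) u"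
  using comp_assoc[OF assms(3) Xm_hom Xm_hom, OF assms(2,1)] Xm_comp[OF assms(1,2)] by simp

lemma cone_hom: "is_cone C Xo Xm T A a \<Longrightarrow> (m,\<sigma>) \<in> T \<Longrightarrow> hom C A (Xo m) (a (m,\<sigma>))"
  unfolding is_cone_def by blast

lemma cone_Ob: "is_cone C Xo Xm T A a \<Longrightarrow> A \<in> Ob C"
  unfolding is_cone_def by blast

lemma cone_comm:
  "is_cone C Xo Xm T A a \<Longrightarrow> (m,\<sigma>) \<in> T \<Longrightarrow> mono_map m' m \<theta> \<Longrightarrow>
   Cmp C (Xm m' m \<theta>) (a (m,\<sigma>)) = a (m', restr m' (\<sigma> \<circ> \<theta>))"
  unfolding is_cone_def by blast

lemma coneI:
  assumes "A \<in> Ob C" "\<And>m \<sigma>. (m,\<sigma>) \<in> T \<Longrightarrow> hom C A (Xo m) (a (m,\<sigma>))"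
    "\<And>m \<sigma> m' \<theta>. (m,\<sigma>) \<in> T \<Longrightarrow> mono_map m' m \<theta> \<Longrightarrow>
       Cmp C (Xm m' m \<theta>) (a (m,\<sigma>)) = a (m', restr m' (\<sigma> \<circ> \<theta>))"
  shows "is_cone C Xo Xm T A a"
  using assms unfolding is_cone_def by auto

lemma cone_subset: "is_cone C Xo Xm T A a \<Longrightarrow> T' \<subseteq> T \<Longrightarrow> is_cone C Xo Xm T' A a"
  unfolding is_cone_def by blast

lemma cone_comp_assoc:
  assumes "is_cone C Xo Xm T A a" "s \<in> T" "hom C B A f" "hom C D B g"
  shows "Cmp C (Cmp C (a s) f) g = Cmp C (a s) (Cmp C f g)"
  using assms comp_assoc[OF assms(4,3) cone_hom] by (cases s) auto

lemma cone_comp_id: "is_cone C Xo Xm T A a \<Longrightarrow> s \<in> T \<Longrightarrow> Cmp C (a s) (Idm C A) = a s"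
  using comp_id_right[OF cone_hom] by (cases s) auto

lemma cone_precomp:
  assumes a: "is_cone C Xo Xm T A a" and f: "hom C B A f"
  shows "is_cone C Xo Xm T B (\<lambda>s. Cmp C (a s) f)"
proof (rule coneI)
  show "B \<in> Ob C" using hom_Ob[OF f] by blast
next
  fix m \<sigma> assume "(m,\<sigma>) \<in> T"
  then show "hom C B (Xo m) (Cmp C (a (m,\<sigma>)) f)" using comp_hom[OF f cone_hom[OF a]] by blast
next
  fix m \<sigma> m' \<theta> assume s: "(m,\<sigma>) \<in> T" and th: "mono_map m' m \<theta>"
  show "Cmp C (Xm m' m \<theta>) (Cmp C (a (m,\<sigma>)) f) = Cmp C (a (m', restr m' (\<sigma> \<circ> \<theta>))) f"
    using comp_assoc[OF f cone_hom[OF a s] Xm_hom[OF th]] cone_comm[OF a s th] by simp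
qed

lemma cone_reindex:
  assumes b: "is_cone C Xo Xm T B b" and \<iota>: "\<And>m \<tau>. (m,\<tau>) \<in> T' \<Longrightarrow> (m, restr m (\<iota> \<circ> \<tau>)) \<in> T"
  shows "is_cone C Xo Xm T' B (\<lambda>(m,\<tau>). b (m, restr m (\<iota> \<circ> \<tau>)))"
proof (rule coneI)
  show "B \<in> Ob C" using cone_Ob[OF b] .
next
  fix m \<tau> assume "(m,\<tau>) \<in> T'"
  then show "hom C B (Xo m) ((\<lambda>(m,\<tau>). b (m, restr m (\<iota> \<circ> \<tau>))) (m,\<tau>))"
    using cone_hom[OF b \<iota>] by simp
next
  fix m \<tau> m' \<theta> assume s: "(m,\<tau>) \<in> T'" and th: "mono_map m' m \<theta>"
  have "restr m' (restr m (\<iota> \<circ> \<tau>) \<circ> \<theta>) = restr m' (\<iota> \<circ> restr m' (\<tau> \<circ> \<theta>))"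
    using th unfolding restr_def mono_map_def by auto
  then show "Cmp C (Xm m' m \<theta>) ((\<lambda>(m,\<tau>). b (m, restr m (\<iota> \<circ> \<tau>))) (m,\<tau>)) =
      (\<lambda>(m,\<tau>). b (m, restr m (\<iota> \<circ> \<tau>))) (m', restr m' (\<tau> \<circ> \<theta>))"
    using cone_comm[OF b \<iota>[OF s] th] by simp
qed

lemma Map_cone: "is_Map C Xo Xm T A a \<Longrightarrow> is_cone C Xo Xm T A a"
  unfolding is_Map_def by blast

lemma Map_factor:
  "is_Map C Xo Xm T A a \<Longrightarrow> is_cone C Xo Xm T B b \<Longrightarrow>
   \<exists>u. hom C B A u \<and> (\<forall>s\<in>T. Cmp C (a s) u = b s)"
  unfolding is_Map_def by blast

lemma Map_uniq:
  assumes M: "is_Map C Xo Xm T A a" and u: "hom C B A u1" "hom C B A u2"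
    and e: "\<And>s. s \<in> T \<Longrightarrow> Cmp C (a s) u1 = Cmp C (a s) u2"
  shows "u1 = u2"
proof -
  have "\<exists>!u. hom C B A u \<and> (\<forall>s\<in>T. Cmp C (a s) u = Cmp C (a s) u1)"
    using M cone_precomp[OF Map_cone[OF M] u(1)] unfolding is_Map_def by blast
  then show ?thesis using u e by metis
qed

lemma Map_endo_id:
  assumes M: "is_Map C Xo Xm T A a" and e: "hom C A A e" "\<And>s. s \<in> T \<Longrightarrow> Cmp C (a s) e = a s"
  shows "e = Idm C A"
proof (rule Map_uniq[OF M e(1) id_hom])
  show "A \<in> Ob C" using hom_Ob[OF e(1)] by blast
next
  fix s assume "s \<in> T"
  then show "Cmp C (a s) e = Cmp C (a s) (Idm C A)" using e(2) cone_comp_id[OF Map_cone[OF M]] by simp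
qed

lemma MapI:
  assumes a: "is_cone C Xo Xm T A a"
    and ex: "\<And>B b. is_cone C Xo Xm T B b \<Longrightarrow> \<exists>u. hom C B A u \<and> (\<forall>s\<in>T. Cmp C (a s) u = b s)"
    and un: "\<And>B u1 u2. hom C B A u1 \<Longrightarrow> hom C B A u2 \<Longrightarrow>
       (\<forall>s\<in>T. Cmp C (a s) u1 = Cmp C (a s) u2) \<Longrightarrow> u1 = u2"
  shows "is_Map C Xo Xm T A a"
  unfolding is_Map_def
proof (intro conjI allI impI a)
  fix B b assume "is_cone C Xo Xm T B b"
  then obtain u where "hom C B A u" "\<forall>s\<in>T. Cmp C (a s) u = b s" using ex by blast
  then show "\<exists>!u. hom C B A u \<and> (\<forall>s\<in>T. Cmp C (a s) u = b s)"
    using un[of B u] by (metis (no_types, lifting))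
qed

lemma Map_top_simplex:
  assumes a: "is_cone C Xo Xm T (Xo d) a" and top: "(d,\<iota>) \<in> T" "a (d,\<iota>) = Idm C (Xo d)"
    and fac: "\<And>m \<sigma>. (m,\<sigma>) \<in> T \<Longrightarrow>
      \<exists>\<rho>. mono_map m d \<rho> \<and> a (m,\<sigma>) = Xm m d \<rho> \<and> restr m (\<iota> \<circ> \<rho>) = \<sigma>"
  shows "is_Map C Xo Xm T (Xo d) a"
proof (rule MapI[OF a])
  fix B b assume b: "is_cone C Xo Xm T B b"
  show "\<exists>u. hom C B (Xo d) u \<and> (\<forall>s\<in>T. Cmp C (a s) u = b s)"
  proof (intro exI conjI ballI)
    show "hom C B (Xo d) (b (d,\<iota>))" using cone_hom[OF b top(1)] .
  next
    fix s assume s: "s \<in> T"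
    obtain m \<sigma> where s_eq: "s = (m,\<sigma>)" by (cases s)
    obtain \<rho> where "mono_map m d \<rho>" "a (m,\<sigma>) = Xm m d \<rho>" "restr m (\<iota> \<circ> \<rho>) = \<sigma>"
      using fac s s_eq by blast
    then show "Cmp C (a s) (b (d,\<iota>)) = b s" using cone_comm[OF b top(1)] s_eq by simp
  qed
next
  fix B u1 u2 assume "hom C B (Xo d) u1" "hom C B (Xo d) u2"
    "\<forall>s\<in>T. Cmp C (a s) u1 = Cmp C (a s) u2"
  then show "u1 = u2" using top comp_id_left by metis
qed

lemma Map_precomp_iso:
  assumes M: "is_Map C Xo Xm T A a" and b: "is_cone C Xo Xm T B b"
    and c: "hom C B A c" "iso C c" and cb: "\<And>s. s \<in> T \<Longrightarrow> Cmp C (a s) c = b s"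
  shows "is_Map C Xo Xm T B b"
proof (rule MapI[OF b])
  obtain g where g: "hom C A B g" "Cmp C c g = Idm C A"
    using iso_inverse[OF c(2,1)] by metis
  fix D d assume "is_cone C Xo Xm T D d"
  then obtain u where u: "hom C D A u" "\<forall>s\<in>T. Cmp C (a s) u = d s"
    using Map_factor[OF M] by blast
  show "\<exists>v. hom C D B v \<and> (\<forall>s\<in>T. Cmp C (b s) v = d s)"
  proof (intro exI conjI ballI)
    show "hom C D B (Cmp C g u)" using comp_hom[OF u(1) g(1)] .
  next
    fix s assume s: "s \<in> T"
    have "Cmp C (b s) (Cmp C g u) = Cmp C (a s) (Cmp C (Cmp C c g) u)"
      using cb[OF s] cone_comp_assoc[OF Map_cone[OF M] s c(1) comp_hom[OF u(1) g(1)]]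
        comp_assoc[OF u(1) g(1) c(1)] by simp
    then show "Cmp C (b s) (Cmp C g u) = d s" using g(2) comp_id_left[OF u(1)] u(2) s by simp
  qed
next
  fix D u1 u2 assume u: "hom C D B u1" "hom C D B u2" "\<forall>s\<in>T. Cmp C (b s) u1 = Cmp C (b s) u2"
  have "Cmp C c u1 = Cmp C c u2"
  proof (rule Map_uniq[OF M comp_hom[OF u(1) c(1)] comp_hom[OF u(2) c(1)]])
    fix s assume s: "s \<in> T"
    show "Cmp C (a s) (Cmp C c u1) = Cmp C (a s) (Cmp C c u2)"
      using u(3) s cb[OF s] cone_comp_assoc[OF Map_cone[OF M] s c(1) u(1)]
        cone_comp_assoc[OF Map_cone[OF M] s c(1) u(2)] by simp
  qed
  then show "u1 = u2" using iso_cancel_left[OF c(2,1) u(1,2)] by blast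
qed

lemma Map_comparison_iso:
  assumes M1: "is_Map C Xo Xm T X x" and M2: "is_Map C Xo Xm T A a"
    and c: "hom C X A c" and cx: "\<And>s. s \<in> T \<Longrightarrow> Cmp C (a s) c = x s"
  shows "iso C c"
proof -
  obtain g where g: "hom C A X g" "\<forall>s\<in>T. Cmp C (x s) g = a s"
    using Map_factor[OF M1 Map_cone[OF M2]] by blast
  have "Cmp C g c = Idm C X"
  proof (rule Map_endo_id[OF M1 comp_hom[OF c g(1)]])
    fix s assume s: "s \<in> T"
    show "Cmp C (x s) (Cmp C g c) = x s"
      using cone_comp_assoc[OF Map_cone[OF M1] s g(1) c] g(2) cx s by simp
  qed
  moreover have "Cmp C c g = Idm C A"
  proof (rule Map_endo_id[OF M2 comp_hom[OF g(1) c]])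
    fix s assume s: "s \<in> T"
    show "Cmp C (a s) (Cmp C c g) = a s"
      using cone_comp_assoc[OF Map_cone[OF M2] s c g(1)] g(2) cx s by simp
  qed
  ultimately show ?thesis using c g(1) unfolding iso_def hom_def by auto
qed

lemma can_cone_cone:
  assumes "T \<subseteq> simplex_set n"
  shows "is_cone C Xo Xm T (Xo n) (can_cone Xm n)"
proof (rule coneI)
  fix m \<sigma> m' \<theta> assume "(m,\<sigma>) \<in> T" and th: "mono_map m' m \<theta>"
  then have "mono_map m n \<sigma>" using assms unfolding simplex_set_def by auto
  then show "Cmp C (Xm m' m \<theta>) (can_cone Xm n (m,\<sigma>)) = can_cone Xm n (m', restr m' (\<sigma> \<circ> \<theta>))"
    unfolding can_cone_def using Xm_comp[OF th] Xm_restr mono_map_comp[OF th] by simp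
qed (use assms Xo_Ob Xm_hom in \<open>auto simp: simplex_set_def can_cone_def\<close>)

lemma can_map_factor:
  assumes M: "is_Map C Xo Xm T A a" and T: "T \<subseteq> simplex_set n"
  shows "hom C (Xo n) A (can_map C Xo Xm n T A a)"
    "\<And>s. s \<in> T \<Longrightarrow> Cmp C (a s) (can_map C Xo Xm n T A a) = can_cone Xm n s"
proof -
  have "\<exists>!u. hom C (Xo n) A u \<and> (\<forall>s\<in>T. Cmp C (a s) u = can_cone Xm n s)"
    using M can_cone_cone[OF T] unfolding is_Map_def by blast
  then have "hom C (Xo n) A (can_map C Xo Xm n T A a) \<and>
      (\<forall>s\<in>T. Cmp C (a s) (can_map C Xo Xm n T A a) = can_cone Xm n s)"
    unfolding can_map_def by (rule theI')
  then show "hom C (Xo n) A (can_map C Xo Xm n T A a)"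
    "\<And>s. s \<in> T \<Longrightarrow> Cmp C (a s) (can_map C Xo Xm n T A a) = can_cone Xm n s" by auto
qed

lemma Map_simplex_set: "is_Map C Xo Xm (simplex_set n) (Xo n) (can_cone Xm n)"
proof (rule Map_top_simplex)
  show "is_cone C Xo Xm (simplex_set n) (Xo n) (can_cone Xm n)" by (rule can_cone_cone) simp
  have "mono_map n n (\<lambda>i. i)" unfolding mono_map_def by auto
  then show "(n, restr n (\<lambda>i. i)) \<in> simplex_set n"
    "can_cone Xm n (n, restr n (\<lambda>i. i)) = Idm C (Xo n)"
    unfolding can_cone_def simplex_set_def using Xm_restr Xm_id
    by (auto simp: mono_map_def normal_def restr_def)
next
  fix m \<sigma> assume "(m,\<sigma>) \<in> simplex_set n"
  then have \<sigma>: "mono_map m n \<sigma>" "normal m \<sigma>" unfolding simplex_set_def by auto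
  then have "restr m (restr n (\<lambda>i. i) \<circ> \<sigma>) = \<sigma>"
    by (intro ext) (auto simp: restr_def mono_map_def normal_def)
  then show "\<exists>\<rho>. mono_map m n \<rho> \<and> can_cone Xm n (m,\<sigma>) = Xm m n \<rho> \<and>
      restr m (restr n (\<lambda>i. i) \<circ> \<rho>) = \<sigma>"
    using \<sigma> unfolding can_cone_def by auto
qed

end

section \<open>Limits over unions of faces\<close>

definition set_rank :: "nat set \<Rightarrow> nat \<Rightarrow> nat" where
  "set_rank S x = card {y\<in>S. y < x}"

definition set_unrank :: "nat set \<Rightarrow> nat \<Rightarrow> nat" where
  "set_unrank S = inv_into S (set_rank S)"

lemma set_rank_mono: "finite S \<Longrightarrow> x \<le> y \<Longrightarrow> set_rank S x \<le> set_rank S y"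
  unfolding set_rank_def by (rule card_mono) auto

lemma set_rank_strict_mono: "finite S \<Longrightarrow> x \<in> S \<Longrightarrow> x < y \<Longrightarrow> set_rank S x < set_rank S y"
  unfolding set_rank_def by (rule psubset_card_mono) auto

lemma set_rank_less_card: "finite S \<Longrightarrow> x \<in> S \<Longrightarrow> set_rank S x < card S"
  unfolding set_rank_def by (rule psubset_card_mono) auto

lemma inj_on_set_rank: "finite S \<Longrightarrow> inj_on (set_rank S) S"
  unfolding inj_on_def by (metis linorder_neqE_nat set_rank_strict_mono less_irrefl)

lemma set_rank_image: "finite S \<Longrightarrow> set_rank S ` S = {..<card S}"
  using set_rank_less_card card_image[OF inj_on_set_rank]
  by (intro card_subset_eq) auto

lemma set_unrank_in: "finite S \<Longrightarrow> i < card S \<Longrightarrow> set_unrank S i \<in> S"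
  unfolding set_unrank_def by (rule inv_into_into) (simp add: set_rank_image)

lemma set_rank_unrank: "finite S \<Longrightarrow> i < card S \<Longrightarrow> set_rank S (set_unrank S i) = i"
  unfolding set_unrank_def by (rule f_inv_into_f) (simp add: set_rank_image)

lemma set_unrank_rank: "finite S \<Longrightarrow> x \<in> S \<Longrightarrow> set_unrank S (set_rank S x) = x"
  unfolding set_unrank_def by (rule inv_into_f_f[OF inj_on_set_rank])

lemma set_unrank_mono:
  assumes S: "finite S" and ij: "i \<le> j" "j < card S"
  shows "set_unrank S i \<le> set_unrank S j"
proof (rule ccontr)
  assume "\<not> set_unrank S i \<le> set_unrank S j"
  then have "set_rank S (set_unrank S j) < set_rank S (set_unrank S i)"
    using set_rank_strict_mono[OF S set_unrank_in[OF S ij(2)]] by simp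
  then show False using set_rank_unrank[OF S] ij by simp
qed

lemma mono_map_set_unrank:
  assumes S: "S \<subseteq> {0..n}" and card_S: "card S = Suc d"
  shows "mono_map d n (set_unrank S)"
proof -
  have fin: "finite S" using S finite_subset by blast
  show ?thesis unfolding mono_map_def
  proof (intro conjI allI impI)
    fix i assume "i \<le> d"
    then show "set_unrank S i \<le> n" using set_unrank_in[OF fin, of i] S card_S by auto
  next
    fix i i' assume "i \<le> i' \<and> i' \<le> d"
    then show "set_unrank S i \<le> set_unrank S i'" using set_unrank_mono[OF fin, of i i'] card_S by simp
  qed
qed

lemma mono_map_set_rank:
  assumes S: "finite S" "card S = Suc d" and \<sigma>: "\<forall>i j. i \<le> j \<and> j \<le> m \<longrightarrow> \<sigma> i \<le> \<sigma> j"
    "\<sigma> ` {0..m} \<subseteq> S"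
  shows "mono_map m d (restr m (set_rank S \<circ> \<sigma>))"
  unfolding mono_map_def restr_def
proof (intro conjI allI impI)
  fix i assume "i \<le> m"
  then have "\<sigma> i \<in> S" using \<sigma>(2) by auto
  then have "set_rank S (\<sigma> i) < Suc d" using set_rank_less_card[OF S(1)] S(2) by metis
  then show "(if i \<le> m then (set_rank S \<circ> \<sigma>) i else 0) \<le> d" by simp
next
  fix i j assume "i \<le> j \<and> j \<le> m"
  then show "(if i \<le> m then (set_rank S \<circ> \<sigma>) i else 0) \<le> (if j \<le> m then (set_rank S \<circ> \<sigma>) j else 0)"
    using \<sigma>(1) set_rank_mono[OF S(1)] by simp
qed

lemma set_unrank_rank_restr:
  assumes "finite S" "\<sigma> ` {0..m} \<subseteq> S" "i \<le> m"
  shows "set_unrank S (restr m (set_rank S \<circ> \<sigma>) i) = \<sigma> i"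
proof -
  have "\<sigma> i \<in> S" using assms(2,3) by auto
  then show ?thesis unfolding restr_def using set_unrank_rank[OF assms(1)] assms(3) by simp
qed

definition down_closed :: "(nat \<times> (nat \<Rightarrow> nat)) set \<Rightarrow> bool" where
  "down_closed T \<longleftrightarrow>
     (\<forall>m \<sigma> m' \<theta>. (m,\<sigma>) \<in> T \<longrightarrow> mono_map m' m \<theta> \<longrightarrow> (m', restr m' (\<sigma> \<circ> \<theta>)) \<in> T)"

definition simplices_in :: "nat set list \<Rightarrow> (nat \<times> (nat \<Rightarrow> nat)) set" where
  "simplices_in Fs = {(m,\<sigma>). (\<forall>i j. i \<le> j \<and> j \<le> m \<longrightarrow> \<sigma> i \<le> \<sigma> j) \<and> normal m \<sigma> \<and>
     (\<exists>F\<in>set Fs. \<sigma> ` {0..m} \<subseteq> F)}"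

lemma down_closed_simplices_in: "down_closed (simplices_in Fs)"
  unfolding down_closed_def simplices_in_def mono_map_def restr_def normal_def
  apply clarsimp
  subgoal for m \<sigma> m' \<theta> F by (rule bexI[of _ F]) (auto simp: subset_iff)
  done

lemma simplices_in_Nil: "simplices_in [] = {}"
  unfolding simplices_in_def by auto

lemma simplices_in_Cons: "simplices_in (F # Fs) = simplices_in [F] \<union> simplices_in Fs"
  unfolding simplices_in_def by auto

lemma simplices_in_Int: "simplices_in [F] \<inter> simplices_in Fs = simplices_in (map ((\<inter>) F) Fs)"
  unfolding simplices_in_def by auto

lemma horn_eq_simplices_in:
  "horn n i = simplices_in (map (\<lambda>j. {0..n} - {j}) (filter (\<lambda>j. j \<noteq> i) [0..<Suc n]))"
proof (intro set_eqI)
  fix x :: "nat \<times> (nat \<Rightarrow> nat)"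
  obtain m \<sigma> where x: "x = (m,\<sigma>)" by (cases x)
  have "(\<exists>F\<in>set (map (\<lambda>j. {0..n} - {j}) (filter (\<lambda>j. j \<noteq> i) [0..<Suc n])). \<sigma> ` {0..m} \<subseteq> F)
     \<longleftrightarrow> (\<forall>k\<le>m. \<sigma> k \<le> n) \<and> (\<exists>j\<le>n. j \<noteq> i \<and> j \<notin> \<sigma> ` {0..m})"
    by (auto simp del: upt_Suc simp add: less_Suc_eq_le image_subset_iff)
  then show "x \<in> horn n i \<longleftrightarrow>
      x \<in> simplices_in (map (\<lambda>j. {0..n} - {j}) (filter (\<lambda>j. j \<noteq> i) [0..<Suc n]))"
    unfolding x horn_def simplices_in_def simplex_set_def mono_map_def mem_Collect_eq case_prod_conv
    by blast
qed

context simplicial_obj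
begin

lemma cone_union:
  assumes d: "down_closed T1" "down_closed T2"
    and b: "is_cone C Xo Xm T1 B b1" "is_cone C Xo Xm T2 B b2"
    and agree: "\<And>s. s \<in> T1 \<inter> T2 \<Longrightarrow> b1 s = b2 s"
  shows "is_cone C Xo Xm (T1 \<union> T2) B (\<lambda>s. if s \<in> T1 then b1 s else b2 s)"
proof (rule coneI)
  show "B \<in> Ob C" using cone_Ob[OF b(1)] .
next
  fix m \<sigma> assume "(m,\<sigma>) \<in> T1 \<union> T2"
  then show "hom C B (Xo m) (if (m,\<sigma>) \<in> T1 then b1 (m,\<sigma>) else b2 (m,\<sigma>))"
    using cone_hom[OF b(1)] cone_hom[OF b(2)] by auto
next
  fix m \<sigma> m' \<theta> assume s: "(m,\<sigma>) \<in> T1 \<union> T2" and th: "mono_map m' m \<theta>"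
  let ?s' = "(m', restr m' (\<sigma> \<circ> \<theta>))"
  show "Cmp C (Xm m' m \<theta>) (if (m,\<sigma>) \<in> T1 then b1 (m,\<sigma>) else b2 (m,\<sigma>)) =
      (if ?s' \<in> T1 then b1 ?s' else b2 ?s')"
  proof (cases "(m,\<sigma>) \<in> T1")
    case True
    then have "?s' \<in> T1" using d(1) th unfolding down_closed_def by blast
    then show ?thesis using True cone_comm[OF b(1) True th] by simp
  next
    case False
    then have T2: "(m,\<sigma>) \<in> T2" using s by blast
    then have "?s' \<in> T2" using d(2) th unfolding down_closed_def by blast
    then show ?thesis using False cone_comm[OF b(2) T2 th] agree[of ?s'] by auto
  qed
qed

text \<open>Gluing along the pullback \<open>Map(T\<^sub>1) \<times>\<^bsub>Map(T\<^sub>1 \<inter> T\<^sub>2)\<^esub> Map(T\<^sub>2)\<close>.\<close>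
context
  fixes T1 T2 A1 A2 A0 a1 a2 a0 r1 r2 p q
  assumes M1: "is_Map C Xo Xm T1 A1 a1" and M2: "is_Map C Xo Xm T2 A2 a2"
    and M0: "is_Map C Xo Xm (T1 \<inter> T2) A0 a0"
    and r1: "hom C A1 A0 r1" "\<forall>s\<in>T1 \<inter> T2. Cmp C (a0 s) r1 = a1 s"
    and r2: "hom C A2 A0 r2" "\<forall>s\<in>T1 \<inter> T2. Cmp C (a0 s) r2 = a2 s"
    and pb: "is_pullback C r1 r2 p q"
begin

abbreviation glued_cone where
  "glued_cone \<equiv> \<lambda>s. if s \<in> T1 then Cmp C (a1 s) p else Cmp C (a2 s) q"

lemma pullback_legs: "hom C (Dom C p) A1 p" "hom C (Dom C p) A2 q" "Cmp C r1 p = Cmp C r2 q"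
  using pb r1(1) r2(1) unfolding is_pullback_def hom_def by auto

lemma glued_cone_right:
  assumes s: "s \<in> T2"
  shows "glued_cone s = Cmp C (a2 s) q"
proof (cases "s \<in> T1")
  case True
  then have s12: "s \<in> T1 \<inter> T2" using s by blast
  have "Cmp C (a1 s) p = Cmp C (a0 s) (Cmp C r1 p)"
    using r1(2) s12 cone_comp_assoc[OF Map_cone[OF M0] s12 r1(1) pullback_legs(1)] by simp
  also have "\<dots> = Cmp C (a2 s) q"
    using r2(2) s12 cone_comp_assoc[OF Map_cone[OF M0] s12 r2(1) pullback_legs(2)] pullback_legs(3)
    by simp
  finally show ?thesis using True by simp
qed simp

lemma glued_cone_factor:
  assumes b: "is_cone C Xo Xm (T1 \<union> T2) B b"
  shows "\<exists>u. hom C B (Dom C p) u \<and> (\<forall>s\<in>T1 \<union> T2. Cmp C (glued_cone s) u = b s)"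
proof -
  obtain u1 where u1: "hom C B A1 u1" "\<forall>s\<in>T1. Cmp C (a1 s) u1 = b s"
    using Map_factor[OF M1 cone_subset[OF b]] by blast
  obtain u2 where u2: "hom C B A2 u2" "\<forall>s\<in>T2. Cmp C (a2 s) u2 = b s"
    using Map_factor[OF M2 cone_subset[OF b]] by blast
  have "Cmp C r1 u1 = Cmp C r2 u2"
  proof (rule Map_uniq[OF M0 comp_hom[OF u1(1) r1(1)] comp_hom[OF u2(1) r2(1)]])
    fix s assume s: "s \<in> T1 \<inter> T2"
    have "Cmp C (a0 s) (Cmp C r1 u1) = b s"
      using cone_comp_assoc[OF Map_cone[OF M0] s r1(1) u1(1)] r1(2) u1(2) s by simp
    moreover have "Cmp C (a0 s) (Cmp C r2 u2) = b s"
      using cone_comp_assoc[OF Map_cone[OF M0] s r2(1) u2(1)] r2(2) u2(2) s by simp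
    ultimately show "Cmp C (a0 s) (Cmp C r1 u1) = Cmp C (a0 s) (Cmp C r2 u2)" by simp
  qed
  then have "\<exists>!u. hom C B (Dom C p) u \<and> Cmp C p u = u1 \<and> Cmp C q u = u2"
    by (intro pullback_factor[OF pb]) (use u1(1) u2(1) r1(1) r2(1) in \<open>auto simp: hom_def\<close>)
  then obtain u where u: "hom C B (Dom C p) u" "Cmp C p u = u1" "Cmp C q u = u2" by blast
  have "Cmp C (glued_cone s) u = b s" if s: "s \<in> T1 \<union> T2" for s
  proof (cases "s \<in> T1")
    case True
    then show ?thesis
      using cone_comp_assoc[OF Map_cone[OF M1] True pullback_legs(1) u(1)] u(2) u1(2) by simp
  next
    case False
    then have "s \<in> T2" using s by blast
    then show ?thesis
      using glued_cone_right cone_comp_assoc[OF Map_cone[OF M2] _ pullback_legs(2) u(1)] u(3) u2(2)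
      by simp
  qed
  with u(1) show ?thesis by blast
qed

lemma glued_cone_uniq:
  assumes v: "hom C B (Dom C p) v1" "hom C B (Dom C p) v2"
    and agree: "\<forall>s\<in>T1 \<union> T2. Cmp C (glued_cone s) v1 = Cmp C (glued_cone s) v2"
  shows "v1 = v2"
proof (rule pullback_jointly_mono[OF pb v])
  show "Cmp C p v1 = Cmp C p v2"
  proof (rule Map_uniq[OF M1 comp_hom[OF v(1) pullback_legs(1)] comp_hom[OF v(2) pullback_legs(1)]])
    fix s assume s: "s \<in> T1"
    then have "Cmp C (Cmp C (a1 s) p) v1 = Cmp C (Cmp C (a1 s) p) v2" using bspec[OF agree, of s] by simp
    then show "Cmp C (a1 s) (Cmp C p v1) = Cmp C (a1 s) (Cmp C p v2)"
      using cone_comp_assoc[OF Map_cone[OF M1] s pullback_legs(1)] v by simp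
  qed
  show "Cmp C q v1 = Cmp C q v2"
  proof (rule Map_uniq[OF M2 comp_hom[OF v(1) pullback_legs(2)] comp_hom[OF v(2) pullback_legs(2)]])
    fix s assume s: "s \<in> T2"
    have "Cmp C (glued_cone s) v1 = Cmp C (glued_cone s) v2" using agree s by blast
    then have "Cmp C (Cmp C (a2 s) q) v1 = Cmp C (Cmp C (a2 s) q) v2" unfolding glued_cone_right[OF s] .
    then show "Cmp C (a2 s) (Cmp C q v1) = Cmp C (a2 s) (Cmp C q v2)"
      using cone_comp_assoc[OF Map_cone[OF M2] s pullback_legs(2)] v by simp
  qed
qed

lemma Map_glued:
  assumes "down_closed T1" "down_closed T2"
  shows "is_Map C Xo Xm (T1 \<union> T2) (Dom C p) glued_cone"
proof (rule MapI[OF cone_union[OF assms]])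
  show "is_cone C Xo Xm T1 (Dom C p) (\<lambda>s. Cmp C (a1 s) p)"
    by (rule cone_precomp[OF Map_cone[OF M1] pullback_legs(1)])
  show "is_cone C Xo Xm T2 (Dom C p) (\<lambda>s. Cmp C (a2 s) q)"
    by (rule cone_precomp[OF Map_cone[OF M2] pullback_legs(2)])
  show "Cmp C (a1 s) p = Cmp C (a2 s) q" if "s \<in> T1 \<inter> T2" for s
    using glued_cone_right[of s] that by simp
next
  fix B b assume "is_cone C Xo Xm (T1 \<union> T2) B b"
  then show "\<exists>u. hom C B (Dom C p) u \<and> (\<forall>s\<in>T1 \<union> T2. Cmp C (glued_cone s) u = b s)"
    by (rule glued_cone_factor)
next
  fix B u1 u2 assume "hom C B (Dom C p) u1" "hom C B (Dom C p) u2"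
    "\<forall>s\<in>T1 \<union> T2. Cmp C (glued_cone s) u1 = Cmp C (glued_cone s) u2"
  then show "u1 = u2" by (rule glued_cone_uniq)
qed

end

end

locale simplicial_obj_finlim = simplicial_obj +
  assumes finite_limits: "has_finite_limits C"
begin

lemma Map_empty: "\<exists>A a. is_Map C Xo Xm {} A a"
proof -
  obtain t where t: "is_terminal C t" using finite_limits unfolding has_finite_limits_def by blast
  have "is_Map C Xo Xm {} t (\<lambda>_. undefined)"
  proof (rule MapI)
    show "is_cone C Xo Xm {} t (\<lambda>_. undefined)" using t unfolding is_cone_def is_terminal_def by auto
  next
    fix B b assume "is_cone C Xo Xm {} B b"
    then show "\<exists>u. hom C B t u \<and> (\<forall>s\<in>{}. Cmp C undefined u = b s)"
      using t cone_Ob unfolding is_terminal_def by blast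
  next
    fix B u1 u2 assume "hom C B t u1" "hom C B t u2"
    then show "u1 = u2" using t hom_Ob unfolding is_terminal_def by blast
  qed
  then show ?thesis by blast
qed

text \<open>A single face is a copy of \<open>\<Delta>\<^sup>d\<close>, relabelled by the ranks of its vertices.\<close>
lemma Map_face:
  assumes F: "finite F"
  shows "\<exists>A a. is_Map C Xo Xm (simplices_in [F]) A a"
proof (cases "F = {}")
  case True
  then have "simplices_in [F] = {}" unfolding simplices_in_def by auto
  then show ?thesis using Map_empty by simp
next
  case False
  define d where "d = card F - 1"
  have card_F: "card F = Suc d" using F False unfolding d_def by (simp add: card_gt_0_iff)
  have rank_le: "set_rank F x \<le> d" if "x \<in> F" for x
    using set_rank_less_card[OF F that] card_F by simp
  define \<iota> where "\<iota> = restr d (set_unrank F)"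
  define a where "a = (\<lambda>(m,\<sigma>). Xm m d (restr m (set_rank F \<circ> \<sigma>)))"
  have mem: "(m,\<sigma>) \<in> simplices_in [F] \<longleftrightarrow>
      (\<forall>i j. i \<le> j \<and> j \<le> m \<longrightarrow> \<sigma> i \<le> \<sigma> j) \<and> normal m \<sigma> \<and> \<sigma> ` {0..m} \<subseteq> F" for m \<sigma>
    unfolding simplices_in_def by auto
  have rank_mono: "mono_map m d (restr m (set_rank F \<circ> \<sigma>))" if "(m,\<sigma>) \<in> simplices_in [F]" for m \<sigma>
    using that by (intro mono_map_set_rank[OF F card_F]) (simp_all add: mem)
  have \<iota>_mem: "(d, \<iota>) \<in> simplices_in [F]"
    unfolding mem \<iota>_def normal_def restr_def
    using set_unrank_mono[OF F] set_unrank_in[OF F] card_F by auto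
  have "is_Map C Xo Xm (simplices_in [F]) (Xo d) a"
  proof (rule Map_top_simplex)
    show "is_cone C Xo Xm (simplices_in [F]) (Xo d) a"
    proof (rule coneI)
      fix m \<sigma> m' \<theta> assume s: "(m,\<sigma>) \<in> simplices_in [F]" and th: "mono_map m' m \<theta>"
      have "Cmp C (Xm m' m \<theta>) (a (m,\<sigma>)) = Xm m' d (restr m (set_rank F \<circ> \<sigma>) \<circ> \<theta>)"
        unfolding a_def using Xm_comp[OF th rank_mono[OF s]] by simp
      also have "\<dots> = Xm m' d (restr m' (set_rank F \<circ> restr m' (\<sigma> \<circ> \<theta>)))"
        by (rule Xm_cong[OF mono_map_comp[OF th rank_mono[OF s]]])
          (use th in \<open>auto simp: restr_def mono_map_def\<close>)
      finally show "Cmp C (Xm m' m \<theta>) (a (m,\<sigma>)) = a (m', restr m' (\<sigma> \<circ> \<theta>))"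
        unfolding a_def by simp
    qed (simp_all add: a_def Xo_Ob Xm_hom rank_mono)
    show "(d, \<iota>) \<in> simplices_in [F]" by (fact \<iota>_mem)
    have "Xm d d (restr d (set_rank F \<circ> \<iota>)) = Xm d d (\<lambda>i. i)"
      by (rule Xm_cong[OF rank_mono[OF \<iota>_mem]])
        (simp add: restr_def \<iota>_def set_rank_unrank[OF F] card_F)
    then show "a (d, \<iota>) = Idm C (Xo d)" unfolding a_def by (simp add: Xm_id)
  next
    fix m \<sigma> assume s: "(m,\<sigma>) \<in> simplices_in [F]"
    have "restr m (\<iota> \<circ> restr m (set_rank F \<circ> \<sigma>)) i = \<sigma> i" for i
    proof (cases "i \<le> m")
      case True
      then have "\<sigma> i \<in> F" using s unfolding mem by auto
      then show ?thesis
        using True rank_le set_unrank_rank[OF F] unfolding restr_def \<iota>_def by simp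
    next
      case False
      then show ?thesis using s unfolding mem normal_def restr_def by simp
    qed
    then show "\<exists>\<rho>. mono_map m d \<rho> \<and> a (m,\<sigma>) = Xm m d \<rho> \<and> restr m (\<iota> \<circ> \<rho>) = \<sigma>"
      using rank_mono[OF s] unfolding a_def by auto
  qed
  then show ?thesis by blast
qed

lemma Map_union:
  assumes d: "down_closed T1" "down_closed T2"
    and M1: "is_Map C Xo Xm T1 A1 a1" and M2: "is_Map C Xo Xm T2 A2 a2"
    and M0: "is_Map C Xo Xm (T1 \<inter> T2) A0 a0"
  shows "\<exists>A a. is_Map C Xo Xm (T1 \<union> T2) A a"
proof -
  obtain r1 where r1: "hom C A1 A0 r1" "\<forall>s\<in>T1 \<inter> T2. Cmp C (a0 s) r1 = a1 s"
    using Map_factor[OF M0 cone_subset[OF Map_cone[OF M1]]] by blast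
  obtain r2 where r2: "hom C A2 A0 r2" "\<forall>s\<in>T1 \<inter> T2. Cmp C (a0 s) r2 = a2 s"
    using Map_factor[OF M0 cone_subset[OF Map_cone[OF M2]]] by blast
  have "\<exists>p q. is_pullback C r1 r2 p q"
    using finite_limits r1(1) r2(1) unfolding has_finite_limits_def hom_def by auto
  then obtain p q where "is_pullback C r1 r2 p q" by blast
  then show ?thesis using Map_glued[OF M1 M2 M0 r1 r2 _ d] by blast
qed

lemma Map_simplices_in: "\<forall>F\<in>set Fs. finite F \<Longrightarrow> \<exists>A a. is_Map C Xo Xm (simplices_in Fs) A a"
proof (induction Fs rule: length_induct)
  case (1 Fs)
  show ?case
  proof (cases Fs)
    case Nil
    then show ?thesis using Map_empty by (simp add: simplices_in_Nil)
  next
    case (Cons F Gs)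
    obtain A1 a1 where M1: "is_Map C Xo Xm (simplices_in [F]) A1 a1"
      using Map_face[of F] "1.prems" Cons by auto
    obtain A2 a2 where M2: "is_Map C Xo Xm (simplices_in Gs) A2 a2"
      using "1.IH"[rule_format, of Gs] "1.prems" Cons by auto
    obtain A0 a0 where "is_Map C Xo Xm (simplices_in (map ((\<inter>) F) Gs)) A0 a0"
      using "1.IH"[rule_format, of "map ((\<inter>) F) Gs"] "1.prems" Cons by auto
    then have M0: "is_Map C Xo Xm (simplices_in [F] \<inter> simplices_in Gs) A0 a0"
      by (simp add: simplices_in_Int)
    show ?thesis unfolding Cons simplices_in_Cons[of F Gs]
      by (rule Map_union[OF down_closed_simplices_in down_closed_simplices_in M1 M2 M0])
  qed
qed

lemma Map_horn: "\<exists>A a. is_Map C Xo Xm (horn n i) A a"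
  unfolding horn_eq_simplices_in by (rule Map_simplices_in) auto

end

section \<open>Extension across skeleta\<close>

lemma skel_subset_simplex_set: "skel j n \<subseteq> simplex_set n"
  unfolding skel_def by auto

lemma skel_subset_skel_Suc: "skel j n \<subseteq> skel (Suc j) n"
  unfolding skel_def by auto

lemma skel_eq_simplex_set:
  assumes "n \<le> j"
  shows "skel j n = simplex_set n"
proof -
  have "card (\<sigma> ` {0..m}) \<le> j + 1" if "(m,\<sigma>) \<in> simplex_set n" for m \<sigma>
  proof -
    have "\<sigma> ` {0..m} \<subseteq> {0..n}" using that unfolding simplex_set_def mono_map_def by auto
    then have "card (\<sigma> ` {0..m}) \<le> card {0..n}" by (rule card_mono[rotated]) simp
    then show ?thesis using assms by simp
  qed
  then show ?thesis unfolding skel_def by auto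
qed

lemma simplex_set_comp:
  "mono_map m N \<tau> \<Longrightarrow> mono_map N n \<iota> \<Longrightarrow> (m, restr m (\<iota> \<circ> \<tau>)) \<in> simplex_set n"
  unfolding simplex_set_def normal_def mono_map_def restr_def by auto

lemma simplex_in_skel: "mono_map m n \<sigma> \<Longrightarrow> (m, restr m \<sigma>) \<in> skel m n"
  using card_image_le[of "{0..m}" "restr m \<sigma>"]
  unfolding skel_def simplex_set_def mono_map_def normal_def restr_def by auto

lemma skel_comp_left:
  assumes \<tau>: "(m,\<tau>) \<in> skel j N" and \<iota>: "mono_map N n \<iota>"
  shows "(m, restr m (\<iota> \<circ> \<tau>)) \<in> skel j n"
proof -
  have "card (restr m (\<iota> \<circ> \<tau>) ` {0..m}) = card (\<iota> ` \<tau> ` {0..m})"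
    by (simp add: image_restr image_comp)
  also have "\<dots> \<le> card (\<tau> ` {0..m})" by (rule card_image_le) simp
  also have "\<dots> \<le> j + 1" using \<tau> unfolding skel_def by auto
  finally show ?thesis
    using \<tau> simplex_set_comp[OF _ \<iota>] unfolding skel_def simplex_set_def by auto
qed

lemma image_restr_comp_subset: "mono_map m' m \<theta> \<Longrightarrow> restr m' (\<sigma> \<circ> \<theta>) ` {0..m'} \<subseteq> \<sigma> ` {0..m}"
  unfolding image_restr mono_map_def by auto

lemma skel_comp_right:
  assumes s: "(m,\<sigma>) \<in> skel i n" and \<theta>: "mono_map m' m \<theta>"
  shows "(m', restr m' (\<sigma> \<circ> \<theta>)) \<in> skel i n"
proof -
  have "card (restr m' (\<sigma> \<circ> \<theta>) ` {0..m'}) \<le> card (\<sigma> ` {0..m})"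
    by (rule card_mono[OF _ image_restr_comp_subset[OF \<theta>]]) simp
  moreover have "mono_map m n \<sigma>" using s unfolding skel_def simplex_set_def by auto
  ultimately show ?thesis using s simplex_set_comp[OF \<theta>] unfolding skel_def by auto
qed

lemma horn_subset_skel: "horn (Suc j) i \<subseteq> skel j (Suc j)"
proof
  fix s assume s: "s \<in> horn (Suc j) i"
  obtain m \<tau> where s_eq: "s = (m,\<tau>)" by (cases s)
  obtain l where l: "l \<le> Suc j" "l \<notin> \<tau> ` {0..m}" using s s_eq unfolding horn_def by auto
  have "\<tau> ` {0..m} \<subseteq> {0..Suc j} - {l}"
    using s s_eq l unfolding horn_def simplex_set_def mono_map_def by auto
  then have "card (\<tau> ` {0..m}) \<le> card ({0..Suc j} - {l})" by (rule card_mono[rotated]) simp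
  then show "s \<in> skel j (Suc j)" using s s_eq l unfolding horn_def skel_def by simp
qed

lemma skel_Suc_not_skel:
  assumes "(m,\<sigma>) \<in> skel (Suc j) n" "(m,\<sigma>) \<notin> skel j n"
  shows "\<sigma> ` {0..m} \<subseteq> {0..n}" "card (\<sigma> ` {0..m}) = Suc (Suc j)"
    and "mono_map m (Suc j) (restr m (set_rank (\<sigma> ` {0..m}) \<circ> \<sigma>))"
proof -
  show S: "\<sigma> ` {0..m} \<subseteq> {0..n}" "card (\<sigma> ` {0..m}) = Suc (Suc j)"
    using assms unfolding skel_def simplex_set_def mono_map_def by auto
  show "mono_map m (Suc j) (restr m (set_rank (\<sigma> ` {0..m}) \<circ> \<sigma>))"
    using assms(1) S(2) unfolding skel_def simplex_set_def
    by (intro mono_map_set_rank) (auto simp: mono_map_def)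
qed

definition coface1 :: "nat \<Rightarrow> nat" where
  "coface1 x = (if x = 0 then 0 else Suc x)"

lemma mono_map_coface1: "mono_map j (Suc j) coface1"
  unfolding mono_map_def coface1_def by auto

lemma coface1_in_skel: "mono_map (Suc j) n \<iota> \<Longrightarrow> (j, restr j (\<iota> \<circ> coface1)) \<in> skel j n"
  by (rule simplex_in_skel[OF mono_map_comp[OF mono_map_coface1]])

lemma factor_through_coface1:
  assumes \<rho>: "mono_map m (Suc j) \<rho>" and one: "1 \<notin> \<rho> ` {0..m}"
  obtains \<rho>' where "mono_map m j \<rho>'" "\<And>x. x \<le> m \<Longrightarrow> coface1 (\<rho>' x) = \<rho> x"
proof
  show "mono_map m j (restr m (\<lambda>x. \<rho> x - 1))"
    using \<rho> unfolding mono_map_def restr_def by (auto simp: diff_le_mono)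
  fix x assume x: "x \<le> m"
  then have "\<rho> x \<in> \<rho> ` {0..m}" by simp
  then have "\<rho> x \<noteq> 1" using one by auto
  then show "coface1 (restr m (\<lambda>x. \<rho> x - 1) x) = \<rho> x" using x unfolding restr_def coface1_def by auto
qed

locale simplicial_obj_unique_fillers = simplicial_obj_finlim +
  fixes k :: nat
  assumes k_pos: "0 < k"
    and horn_iso: "\<And>n i A a. k < n \<Longrightarrow> 0 < i \<Longrightarrow> i < n \<Longrightarrow> is_Map C Xo Xm (horn n i) A a \<Longrightarrow>
       iso C (can_map C Xo Xm n (horn n i) A a)"
begin

lemma Map_horn_simplex:
  assumes "k < n" "0 < i" "i < n"
  shows "is_Map C Xo Xm (horn n i) (Xo n) (can_cone Xm n)"
proof -
  obtain A a where M: "is_Map C Xo Xm (horn n i) A a" using Map_horn by blast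
  have T: "horn n i \<subseteq> simplex_set n" unfolding horn_def by auto
  show ?thesis
    using Map_precomp_iso[OF M can_cone_cone[OF T] can_map_factor(1)[OF M T] horn_iso[OF assms M]]
      can_map_factor(2)[OF M T] by blast
qed

lemma skel_agree_Suc:
  assumes j: "k \<le> j" and u: "hom C B (Xo n) u1" "hom C B (Xo n) u2"
    and agree: "\<And>m \<sigma>. (m,\<sigma>) \<in> skel j n \<Longrightarrow> Cmp C (Xm m n \<sigma>) u1 = Cmp C (Xm m n \<sigma>) u2"
    and s: "(m,\<sigma>) \<in> skel (Suc j) n"
  shows "Cmp C (Xm m n \<sigma>) u1 = Cmp C (Xm m n \<sigma>) u2"
proof (cases "(m,\<sigma>) \<in> skel j n")
  case True
  then show ?thesis by (rule agree)
next
  case False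
  define S where "S = \<sigma> ` {0..m}"
  define \<rho> where "\<rho> = restr m (set_rank S \<circ> \<sigma>)"
  note S = skel_Suc_not_skel[OF s False, folded S_def, folded \<rho>_def]
  have \<sigma>: "mono_map m n \<sigma>" using s unfolding skel_def simplex_set_def by auto
  have \<iota>: "mono_map (Suc j) n (set_unrank S)" by (rule mono_map_set_unrank[OF S(1,2)])
  have fac: "Xm m n \<sigma> = Xm m n (set_unrank S \<circ> \<rho>)"
    by (rule Xm_cong[OF \<sigma>]) (simp add: \<rho>_def set_unrank_rank_restr S_def)
  have "Cmp C (Xm (Suc j) n (set_unrank S)) u1 = Cmp C (Xm (Suc j) n (set_unrank S)) u2"
  proof (rule Map_uniq[OF Map_horn_simplex comp_hom[OF u(1) Xm_hom[OF \<iota>]] comp_hom[OF u(2) Xm_hom[OF \<iota>]]])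
    show "k < Suc j" "0 < (1::nat)" "1 < Suc j" using j k_pos by auto
  next
    fix t assume t: "t \<in> horn (Suc j) 1"
    obtain m' \<tau> where t_eq: "t = (m',\<tau>)" by (cases t)
    have \<tau>: "mono_map m' (Suc j) \<tau>" using t t_eq unfolding horn_def simplex_set_def by auto
    have sk: "(m', restr m' (set_unrank S \<circ> \<tau>)) \<in> skel j n"
      using skel_comp_left[OF _ \<iota>] horn_subset_skel t t_eq by blast
    show "Cmp C (can_cone Xm (Suc j) t) (Cmp C (Xm (Suc j) n (set_unrank S)) u1) =
        Cmp C (can_cone Xm (Suc j) t) (Cmp C (Xm (Suc j) n (set_unrank S)) u2)"
      using Xm_comp_hom[OF \<tau> \<iota> u(1)] Xm_comp_hom[OF \<tau> \<iota> u(2)] agree[OF sk]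
        Xm_restr[OF mono_map_comp[OF \<tau> \<iota>]] unfolding t_eq can_cone_def by simp
  qed
  then show ?thesis
    using Xm_comp_hom[OF S(3) \<iota> u(1)] Xm_comp_hom[OF S(3) \<iota> u(2)] fac by simp
qed

context
  fixes j n B b
  assumes j: "k < j" and b: "is_cone C Xo Xm (skel j n) B b"
begin

lemma horn_filler:
  assumes \<iota>: "mono_map (Suc j) n \<iota>"
  obtains w where "hom C B (Xo (Suc j)) w"
    "\<And>m \<tau>. (m,\<tau>) \<in> horn (Suc j) 1 \<Longrightarrow> Cmp C (Xm m (Suc j) \<tau>) w = b (m, restr m (\<iota> \<circ> \<tau>))"
proof -
  have "is_cone C Xo Xm (horn (Suc j) 1) B (\<lambda>(m,\<tau>). b (m, restr m (\<iota> \<circ> \<tau>)))"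
    by (rule cone_reindex[OF b]) (use skel_comp_left[OF _ \<iota>] horn_subset_skel in blast)
  moreover have "is_Map C Xo Xm (horn (Suc j) 1) (Xo (Suc j)) (can_cone Xm (Suc j))"
    by (rule Map_horn_simplex) (use j in auto)
  ultimately obtain w where w: "hom C B (Xo (Suc j)) w"
    and fill: "\<forall>s\<in>horn (Suc j) 1. Cmp C (can_cone Xm (Suc j) s) w = (\<lambda>(m,\<tau>). b (m, restr m (\<iota> \<circ> \<tau>))) s"
    using Map_factor by blast
  have "Cmp C (Xm m (Suc j) \<tau>) w = b (m, restr m (\<iota> \<circ> \<tau>))" if "(m,\<tau>) \<in> horn (Suc j) 1" for m \<tau>
    using fill that unfolding can_cone_def by auto
  with w show thesis by (rule that)
qed

text \<open>The face \<open>d\<^sub>1\<close> missing from the horn is forced by uniqueness of fillers one dimension lower.\<close>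
lemma horn_filler_face1:
  assumes \<iota>: "mono_map (Suc j) n \<iota>" and w: "hom C B (Xo (Suc j)) w"
    and fill: "\<And>m \<tau>. (m,\<tau>) \<in> horn (Suc j) 1 \<Longrightarrow> Cmp C (Xm m (Suc j) \<tau>) w = b (m, restr m (\<iota> \<circ> \<tau>))"
  shows "Cmp C (Xm j (Suc j) coface1) w = b (j, restr j (\<iota> \<circ> coface1))"
proof -
  have face: "(j, restr j (\<iota> \<circ> coface1)) \<in> skel j n" by (rule coface1_in_skel[OF \<iota>])
  have M: "is_Map C Xo Xm (horn j 1) (Xo j) (can_cone Xm j)"
    by (rule Map_horn_simplex) (use j k_pos in auto)
  show ?thesis
  proof (rule Map_uniq[OF M comp_hom[OF w Xm_hom[OF mono_map_coface1]] cone_hom[OF b face]])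
    fix t assume t: "t \<in> horn j 1"
    obtain m \<tau> where t_eq: "t = (m,\<tau>)" by (cases t)
    have \<tau>: "mono_map m j \<tau>" using t t_eq unfolding horn_def simplex_set_def by auto
    obtain l where l: "l \<le> j" "l \<noteq> 1" "l \<notin> \<tau> ` {0..m}" using t t_eq unfolding horn_def by auto
    have "coface1 l \<notin> coface1 ` \<tau> ` {0..m}" using l(3) unfolding coface1_def by auto
    then have "coface1 l \<notin> restr m (coface1 \<circ> \<tau>) ` {0..m}" by (simp add: image_restr image_comp)
    moreover have "coface1 l \<le> Suc j" "coface1 l \<noteq> 1" using l(1,2) unfolding coface1_def by auto
    ultimately have "(m, restr m (coface1 \<circ> \<tau>)) \<in> horn (Suc j) 1"
      using simplex_set_comp[OF \<tau> mono_map_coface1] unfolding horn_def by blast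
    then have "Cmp C (Xm m (Suc j) (coface1 \<circ> \<tau>)) w = b (m, restr m (\<iota> \<circ> restr m (coface1 \<circ> \<tau>)))"
      using fill Xm_restr[OF mono_map_comp[OF \<tau> mono_map_coface1]] by metis
    also have "restr m (\<iota> \<circ> restr m (coface1 \<circ> \<tau>)) = restr m (restr j (\<iota> \<circ> coface1) \<circ> \<tau>)"
      using \<tau> unfolding restr_def mono_map_def by auto
    also have "b (m, \<dots>) = Cmp C (Xm m j \<tau>) (b (j, restr j (\<iota> \<circ> coface1)))"
      using cone_comm[OF b face \<tau>] by simp
    finally show "Cmp C (can_cone Xm j t) (Cmp C (Xm j (Suc j) coface1) w) =
        Cmp C (can_cone Xm j t) (b (j, restr j (\<iota> \<circ> coface1)))"
      using Xm_comp_hom[OF \<tau> mono_map_coface1 w] unfolding t_eq can_cone_def by (simp add: o_def)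
  qed
qed

lemma boundary_filler:
  assumes \<iota>: "mono_map (Suc j) n \<iota>"
  shows "\<exists>w. hom C B (Xo (Suc j)) w \<and> (\<forall>m \<rho> l. mono_map m (Suc j) \<rho> \<longrightarrow> l \<le> Suc j \<longrightarrow>
      l \<notin> \<rho> ` {0..m} \<longrightarrow> Cmp C (Xm m (Suc j) \<rho>) w = b (m, restr m (\<iota> \<circ> \<rho>)))"
proof -
  obtain w where w: "hom C B (Xo (Suc j)) w"
    and fill: "\<And>m \<tau>. (m,\<tau>) \<in> horn (Suc j) 1 \<Longrightarrow> Cmp C (Xm m (Suc j) \<tau>) w = b (m, restr m (\<iota> \<circ> \<tau>))"
    using horn_filler[OF \<iota>] by blast
  have "Cmp C (Xm m (Suc j) \<rho>) w = b (m, restr m (\<iota> \<circ> \<rho>))"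
    if \<rho>: "mono_map m (Suc j) \<rho>" and l: "l \<le> Suc j" "l \<notin> \<rho> ` {0..m}" for m \<rho> l
  proof (cases "l = 1")
    case False
    have "l \<notin> restr m \<rho> ` {0..m}" using l(2) by (simp add: image_restr)
    then have "(m, restr m \<rho>) \<in> horn (Suc j) 1"
      using simplex_in_skel[OF \<rho>] l(1) False unfolding horn_def skel_def by blast
    then have "Cmp C (Xm m (Suc j) \<rho>) w = b (m, restr m (\<iota> \<circ> restr m \<rho>))"
      using fill Xm_restr[OF \<rho>] by metis
    also have "restr m (\<iota> \<circ> restr m \<rho>) = restr m (\<iota> \<circ> \<rho>)" unfolding restr_def by auto
    finally show ?thesis .
  next
    case True
    then have "1 \<notin> \<rho> ` {0..m}" using l(2) by simp
    then obtain \<rho>' where \<rho>': "mono_map m j \<rho>'" and \<rho>_eq: "\<And>x. x \<le> m \<Longrightarrow> coface1 (\<rho>' x) = \<rho> x"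
      using factor_through_coface1[OF \<rho>] by blast
    have "Xm m (Suc j) \<rho> = Xm m (Suc j) (coface1 \<circ> \<rho>')"
      by (rule Xm_cong[OF \<rho>]) (simp add: \<rho>_eq)
    then have "Cmp C (Xm m (Suc j) \<rho>) w = Cmp C (Xm m j \<rho>') (Cmp C (Xm j (Suc j) coface1) w)"
      using Xm_comp_hom[OF \<rho>' mono_map_coface1 w] by simp
    also have "\<dots> = Cmp C (Xm m j \<rho>') (b (j, restr j (\<iota> \<circ> coface1)))"
      using horn_filler_face1[OF \<iota> w fill] by simp
    also have "\<dots> = b (m, restr m (restr j (\<iota> \<circ> coface1) \<circ> \<rho>'))"
      using cone_comm[OF b coface1_in_skel[OF \<iota>] \<rho>'] .
    also have "restr m (restr j (\<iota> \<circ> coface1) \<circ> \<rho>') = restr m (\<iota> \<circ> \<rho>)"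
    proof
      fix x show "restr m (restr j (\<iota> \<circ> coface1) \<circ> \<rho>') x = restr m (\<iota> \<circ> \<rho>) x"
        using \<rho>' \<rho>_eq[of x] unfolding restr_def mono_map_def by auto
    qed
    finally show ?thesis .
  qed
  then show ?thesis using w by blast
qed

text \<open>A chosen value of the extension on the nondegenerate \<open>(j+1)\<close>-simplex with vertex set \<open>S\<close>.\<close>
definition top_filler where
  "top_filler S = (SOME w. hom C B (Xo (Suc j)) w \<and> (\<forall>m \<rho> l. mono_map m (Suc j) \<rho> \<longrightarrow> l \<le> Suc j \<longrightarrow>
      l \<notin> \<rho> ` {0..m} \<longrightarrow> Cmp C (Xm m (Suc j) \<rho>) w = b (m, restr m (set_unrank S \<circ> \<rho>))))"

lemma top_filler:
  assumes "S \<subseteq> {0..n}" "card S = Suc (Suc j)"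
  shows "hom C B (Xo (Suc j)) (top_filler S)"
    and "\<And>m \<rho> l. mono_map m (Suc j) \<rho> \<Longrightarrow> l \<le> Suc j \<Longrightarrow> l \<notin> \<rho> ` {0..m} \<Longrightarrow>
      Cmp C (Xm m (Suc j) \<rho>) (top_filler S) = b (m, restr m (set_unrank S \<circ> \<rho>))"
  using someI_ex[OF boundary_filler[OF mono_map_set_unrank[OF assms]]]
  unfolding top_filler_def by blast+

definition skel_extension where
  "skel_extension = (\<lambda>(m,\<sigma>). if (m,\<sigma>) \<in> skel j n then b (m,\<sigma>)
     else Cmp C (Xm m (Suc j) (restr m (set_rank (\<sigma> ` {0..m}) \<circ> \<sigma>))) (top_filler (\<sigma> ` {0..m})))"

lemma skel_extension_restrict: "s \<in> skel j n \<Longrightarrow> skel_extension s = b s"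
  unfolding skel_extension_def by (cases s) simp

lemma skel_extension_face:
  assumes s: "(m,\<sigma>) \<in> skel (Suc j) n"
    and S: "S \<subseteq> {0..n}" "card S = Suc (Suc j)" "\<sigma> ` {0..m} \<subseteq> S"
  shows "skel_extension (m,\<sigma>) = Cmp C (Xm m (Suc j) (restr m (set_rank S \<circ> \<sigma>))) (top_filler S)"
proof (cases "(m,\<sigma>) \<in> skel j n")
  case True
  have fin: "finite S" using S(1) finite_subset by blast
  have \<sigma>: "mono_map m n \<sigma>" "normal m \<sigma>" using s unfolding skel_def simplex_set_def by auto
  define \<rho> where "\<rho> = restr m (set_rank S \<circ> \<sigma>)"
  have \<rho>: "mono_map m (Suc j) \<rho>"
    unfolding \<rho>_def using \<sigma>(1) by (intro mono_map_set_rank[OF fin S(2) _ S(3)]) (auto simp: mono_map_def)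
  have "card (\<rho> ` {0..m}) \<le> card (\<sigma> ` {0..m})"
    unfolding \<rho>_def image_restr image_comp[symmetric] by (rule card_image_le) simp
  also have "\<dots> \<le> Suc j" using True unfolding skel_def by auto
  finally have "\<not> {0..Suc j} \<subseteq> \<rho> ` {0..m}"
    using card_mono[of "\<rho> ` {0..m}" "{0..Suc j}"] by auto
  then obtain l where l: "l \<le> Suc j" "l \<notin> \<rho> ` {0..m}" by (meson atLeastAtMost_iff subsetI)
  have "restr m (set_unrank S \<circ> \<rho>) x = \<sigma> x" for x
  proof (cases "x \<le> m")
    case True
    then show ?thesis using set_unrank_rank_restr[OF fin S(3) True] unfolding \<rho>_def restr_def by simp
  next
    case False
    then show ?thesis using \<sigma>(2) unfolding restr_def normal_def by simp
  qed
  then have "restr m (set_unrank S \<circ> \<rho>) = \<sigma>" by (rule ext)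
  then show ?thesis
    using top_filler(2)[OF S(1,2) \<rho> l] True unfolding skel_extension_def \<rho>_def by simp
next
  case False
  have "finite S" using S(1) finite_subset by blast
  then have "\<sigma> ` {0..m} = S"
    using card_subset_eq[OF _ S(3)] skel_Suc_not_skel(2)[OF s False] S(2) by simp
  then show ?thesis using False unfolding skel_extension_def by simp
qed

lemma skel_extension_hom:
  assumes s: "(m,\<sigma>) \<in> skel (Suc j) n"
  shows "hom C B (Xo m) (skel_extension (m,\<sigma>))"
proof (cases "(m,\<sigma>) \<in> skel j n")
  case True
  then show ?thesis using cone_hom[OF b True] skel_extension_restrict by simp
next
  case False
  note S = skel_Suc_not_skel[OF s False]
  show ?thesis
    using comp_hom[OF top_filler(1)[OF S(1,2)] Xm_hom[OF S(3)]] skel_extension_face[OF s S(1,2)] by simp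
qed

lemma skel_extension_comm:
  assumes s: "(m,\<sigma>) \<in> skel (Suc j) n" and \<theta>: "mono_map m' m \<theta>"
  shows "Cmp C (Xm m' m \<theta>) (skel_extension (m,\<sigma>)) = skel_extension (m', restr m' (\<sigma> \<circ> \<theta>))"
proof (cases "(m,\<sigma>) \<in> skel j n")
  case True
  then show ?thesis
    using cone_comm[OF b True \<theta>] skel_extension_restrict skel_comp_right[OF True \<theta>] by simp
next
  case False
  define S where "S = \<sigma> ` {0..m}"
  define \<rho> where "\<rho> = restr m (set_rank S \<circ> \<sigma>)"
  note S = skel_Suc_not_skel[OF s False, folded S_def, folded \<rho>_def]
  have "Cmp C (Xm m' m \<theta>) (skel_extension (m,\<sigma>)) = Cmp C (Xm m' (Suc j) (\<rho> \<circ> \<theta>)) (top_filler S)"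
    using skel_extension_face[OF s S(1,2)] Xm_comp_hom[OF \<theta> S(3) top_filler(1)[OF S(1,2)]]
    unfolding \<rho>_def S_def by simp
  also have "Xm m' (Suc j) (\<rho> \<circ> \<theta>) = Xm m' (Suc j) (restr m' (set_rank S \<circ> restr m' (\<sigma> \<circ> \<theta>)))"
    by (rule Xm_cong[OF mono_map_comp[OF \<theta> S(3)]])
      (use \<theta> in \<open>auto simp: \<rho>_def restr_def mono_map_def\<close>)
  also have "Cmp C \<dots> (top_filler S) = skel_extension (m', restr m' (\<sigma> \<circ> \<theta>))"
    using skel_extension_face[OF skel_comp_right[OF s \<theta>] S(1,2)] image_restr_comp_subset[OF \<theta>]
    unfolding S_def by simp
  finally show ?thesis .
qed

lemma skel_extension_cone: "is_cone C Xo Xm (skel (Suc j) n) B skel_extension"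
  by (rule coneI[OF cone_Ob[OF b] skel_extension_hom skel_extension_comm])

end

lemma Map_skel_step:
  assumes j: "k < j" and M: "is_Map C Xo Xm (skel (Suc j) n) (Xo n) (can_cone Xm n)"
  shows "is_Map C Xo Xm (skel j n) (Xo n) (can_cone Xm n)"
proof (rule MapI[OF can_cone_cone[OF skel_subset_simplex_set]])
  fix B b assume b: "is_cone C Xo Xm (skel j n) B b"
  obtain u where u: "hom C B (Xo n) u"
    and ext: "\<forall>s\<in>skel (Suc j) n. Cmp C (can_cone Xm n s) u = skel_extension j n B b s"
    using Map_factor[OF M skel_extension_cone[OF j b]] by blast
  have "Cmp C (can_cone Xm n s) u = b s" if s: "s \<in> skel j n" for s
  proof -
    have "s \<in> skel (Suc j) n" using s skel_subset_skel_Suc by blast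
    then show ?thesis using ext skel_extension_restrict[OF j b s] by simp
  qed
  with u show "\<exists>u. hom C B (Xo n) u \<and> (\<forall>s\<in>skel j n. Cmp C (can_cone Xm n s) u = b s)"
    by blast
next
  fix B u1 u2 assume u: "hom C B (Xo n) u1" "hom C B (Xo n) u2"
    and agree: "\<forall>s\<in>skel j n. Cmp C (can_cone Xm n s) u1 = Cmp C (can_cone Xm n s) u2"
  show "u1 = u2"
  proof (rule Map_uniq[OF M u])
    fix s assume s: "s \<in> skel (Suc j) n"
    obtain m \<sigma> where s_eq: "s = (m,\<sigma>)" by (cases s)
    have agree': "Cmp C (Xm m' n \<sigma>') u1 = Cmp C (Xm m' n \<sigma>') u2" if "(m',\<sigma>') \<in> skel j n" for m' \<sigma>'
      using bspec[OF agree that] unfolding can_cone_def by simp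
    have "Cmp C (Xm m n \<sigma>) u1 = Cmp C (Xm m n \<sigma>) u2"
      using skel_agree_Suc[OF _ u agree' s[unfolded s_eq]] j by simp
    then show "Cmp C (can_cone Xm n s) u1 = Cmp C (can_cone Xm n s) u2"
      unfolding s_eq can_cone_def by simp
  qed
qed

lemma Map_skel: "k < j \<Longrightarrow> is_Map C Xo Xm (skel j n) (Xo n) (can_cone Xm n)"
proof (induction "n - j" arbitrary: j)
  case 0
  then show ?case using Map_simplex_set skel_eq_simplex_set[of n j] by simp
next
  case (Suc d)
  then have "is_Map C Xo Xm (skel (Suc j) n) (Xo n) (can_cone Xm n)" by simp
  then show ?case by (rule Map_skel_step[OF Suc.prems])
qed

end

theorem lemma6p2:
  fixes C :: "('o,'m) cat" and Cov :: "'m set" and k :: nat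
    and Xo :: "nat \<Rightarrow> 'o" and Xm :: "nat \<Rightarrow> nat \<Rightarrow> (nat \<Rightarrow> nat) \<Rightarrow> 'm"
  assumes "descent_category C Cov"
    and "0 < k"
    and "k_category C Cov k Xo Xm"
  shows "\<forall>n. is_Map C Xo Xm (skel (k + 1) n) (Xo n) (can_cone Xm n) \<and>
             (\<forall>A a. is_Map C Xo Xm (skel (k + 1) n) A a \<longrightarrow>
                iso C (can_map C Xo Xm n (skel (k + 1) n) A a))"
proof -
  interpret simplicial_obj_unique_fillers C Xo Xm k
  proof unfold_locales
    show "is_category C" "has_finite_limits C" using assms(1) unfolding descent_category_def by auto
    show "simplicial_object C Xo Xm" using assms(3) unfolding k_category_def by auto
    show "0 < k" by (fact assms(2))
    show "iso C (can_map C Xo Xm n (horn n i) A a)"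
      if "k < n" "0 < i" "i < n" "is_Map C Xo Xm (horn n i) A a" for n i A a
      using assms(3) that unfolding k_category_def by blast
  qed
  have M: "is_Map C Xo Xm (skel (k + 1) n) (Xo n) (can_cone Xm n)" for n
    by (rule Map_skel) simp
  show ?thesis
  proof (intro allI conjI impI M)
    fix n A a assume "is_Map C Xo Xm (skel (k + 1) n) A a"
    then show "iso C (can_map C Xo Xm n (skel (k + 1) n) A a)"
      using Map_comparison_iso[OF M] can_map_factor[OF _ skel_subset_simplex_set] by blast
  qed
qed

end
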